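(* Let $(u_k)_{k\in\mathbb N}$, with associated $(\tau_k)$, be generated by the proximal-gradient algorithm and assume $\nabla F$ is Lipschitz continuous from $L^2(0,T)$ to $L^2(0,T)$. Let $\bar u\in U_{ad}$ be the weak-$\star$ limit of $(u_k)$ in $\mathrm{BV}(0,T)$. Then for every accumulation point $\bar\tau$ of $(\tau_k)$, $\bar u$ solves \[\min_{u\in U_{ad}}\ F(\bar u)+(\nabla F(\bar u),u-\bar u)_{L^2(0,T)}+\frac{\bar\tau}2\|u-\bar u\|_{L^2(0,T)}^2+\beta\mathrm{TV}(u).\]
   Context: $T>0$, $\beta>0$; $\nu_1<\dots<\nu_d$ are integers. $\mathrm{TV}(u):=\sup\{\int_0^T u\varphi'\,dt : \varphi\in C_c^1(0,T),\ \|\varphi\|_\infty\le 1\}$, $\mathrm{BV}(0,T)=\{u\in L^1(0,T):\mathrm{TV}(u)<\infty\}$. $U_{ad}:=\{u\in L^1(0,T): u(t)\in\{\nu_1,\dots,\nu_d\}\text{ a.e.}\}$. $F:L^1(0,T)\to\mathbb R$ is bounded from below and Gâteaux differentiable on $L^2(0,T)$ with gradient $\nabla F(u)\in L^2(0,T)$. $G(u):=\beta\mathrm{TV}(u)+\delta_{U_{ad}}(u)$ with $\delta_{U_{ad}}$ the indicator ($0$ on $U_{ad}$, $\infty$ elsewhere). Proximal-gradient algorithm: given $u_0\in U_{ad}\cap\mathrm{BV}(0,T)$ and $\eta>0$, for $k=0,1,\dots$ choose $\tau_k>0$ and a solution $u_{k+1}$ of $\min_{u\in L^2(0,T)} F(u_k)+(\nabla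 F(u_k),u-u_k)_{L^2}+\frac{\tau_k}2\|u-u_k\|_{L^2}^2+G(u)$ satisfying $\eta\|u_{k+1}-u_k\|_{L^2}^2\le F(u_k)+\beta\mathrm{TV}(u_k)-(F(u_{k+1})+\beta\mathrm{TV}(u_{k+1}))$. Under these assumptions such a sequence converges weakly-$\star$ in $\mathrm{BV}(0,T)$ to some $\bar u\in U_{ad}$. *)

theory Defs
  imports "HOL-Analysis.Analysis"
begin

text \<open>Functions on (0,T) are represented by real-valued functions on the reals;
  only their values on the open interval (0,T) matter (Lebesgue measure).\<close>

definition L1 :: "real \<Rightarrow> (real \<Rightarrow> real) \<Rightarrow> bool" where
  "L1 T u \<longleftrightarrow> set_integrable lborel {0<..<T} u"

definition L2 :: "real \<Rightarrow> (real \<Rightarrow> real) \<Rightarrow> bool" where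
  "L2 T u \<longleftrightarrow> set_borel_measurable lborel {0<..<T} u
      \<and> set_integrable lborel {0<..<T} (\<lambda>t. (u t)^2)"

definition ipL2 :: "real \<Rightarrow> (real \<Rightarrow> real) \<Rightarrow> (real \<Rightarrow> real) \<Rightarrow> real" where
  "ipL2 T u v = (LINT t:{0<..<T}|lborel. u t * v t)"

definition nrm2L2 :: "real \<Rightarrow> (real \<Rightarrow> real) \<Rightarrow> real" where
  "nrm2L2 T u = ipL2 T u u"

definition nrmL2 :: "real \<Rightarrow> (real \<Rightarrow> real) \<Rightarrow> real" where
  "nrmL2 T u = sqrt (nrm2L2 T u)"

definition Cc1 :: "real \<Rightarrow> (real \<Rightarrow> real) set" where
  "Cc1 T = {\<phi>. (\<exists>\<phi>'. continuous_on UNIV \<phi>' \<and> (\<forall>t. (\<phi> has_real_derivative \<phi>' t) (at t)))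
               \<and> (\<exists>a b. 0 < a \<and> a \<le> b \<and> b < T \<and> (\<forall>t. t \<notin> {a..b} \<longrightarrow> \<phi> t = 0))}"

definition TV :: "real \<Rightarrow> (real \<Rightarrow> real) \<Rightarrow> ereal" where
  "TV T u = (SUP \<phi>\<in>{\<phi>\<in>Cc1 T. \<forall>t. \<bar>\<phi> t\<bar> \<le> 1}.
               ereal (LINT t:{0<..<T}|lborel. u t * deriv \<phi> t))"

definition BV :: "real \<Rightarrow> (real \<Rightarrow> real) \<Rightarrow> bool" where
  "BV T u \<longleftrightarrow> L1 T u \<and> TV T u < \<infinity>"

definition Uad :: "real \<Rightarrow> int set \<Rightarrow> (real \<Rightarrow> real) set" where
  "Uad T V = {u. L1 T u \<and> (AE t in lborel. t \<in> {0<..<T} \<longrightarrow> u t \<in> real_of_int ` V)}"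

definition delta_Uad :: "real \<Rightarrow> int set \<Rightarrow> (real \<Rightarrow> real) \<Rightarrow> ereal" where
  "delta_Uad T V u = (if u \<in> Uad T V then 0 else \<infinity>)"

definition Gfun :: "real \<Rightarrow> real \<Rightarrow> int set \<Rightarrow> (real \<Rightarrow> real) \<Rightarrow> ereal" where
  "Gfun T \<beta> V u = ereal \<beta> * TV T u + delta_Uad T V u"

definition lin_model :: "real \<Rightarrow> ((real \<Rightarrow> real) \<Rightarrow> real) \<Rightarrow> ((real \<Rightarrow> real) \<Rightarrow> (real \<Rightarrow> real))
     \<Rightarrow> (real \<Rightarrow> real) \<Rightarrow> real \<Rightarrow> (real \<Rightarrow> real) \<Rightarrow> real" where
  "lin_model T F gradF w \<tau> v =
     F w + ipL2 T (gradF w) (\<lambda>t. v t - w t) + \<tau> / 2 * nrm2L2 T (\<lambda>t. v t - w t)"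

definition standing :: "real \<Rightarrow> real \<Rightarrow> int set \<Rightarrow> ((real \<Rightarrow> real) \<Rightarrow> real)
     \<Rightarrow> ((real \<Rightarrow> real) \<Rightarrow> (real \<Rightarrow> real)) \<Rightarrow> bool" where
  "standing T \<beta> V F gradF \<longleftrightarrow>
     T > 0 \<and> \<beta> > 0 \<and> finite V \<and> V \<noteq> {}
     \<comment> \<open>F is a map on L1(0,T), i.e. independent of the representative\<close>
     \<and> (\<forall>u v. L1 T u \<longrightarrow> L1 T v \<longrightarrow> (AE t in lborel. t \<in> {0<..<T} \<longrightarrow> u t = v t) \<longrightarrow> F u = F v)
     \<comment> \<open>F bounded from below\<close>
     \<and> (\<exists>c. \<forall>u. L1 T u \<longrightarrow> c \<le> F u)
     \<comment> \<open>Gateaux differentiability on L2 with gradient in L2\<close>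
     \<and> (\<forall>u. L2 T u \<longrightarrow> L2 T (gradF u) \<and>
           (\<forall>v. L2 T v \<longrightarrow>
              ((\<lambda>s. (F (\<lambda>t. u t + s * v t) - F u) / s) \<longlongrightarrow> ipL2 T (gradF u) v) (at 0)))"

definition prox_grad_seq :: "real \<Rightarrow> real \<Rightarrow> int set \<Rightarrow> ((real \<Rightarrow> real) \<Rightarrow> real)
     \<Rightarrow> ((real \<Rightarrow> real) \<Rightarrow> (real \<Rightarrow> real)) \<Rightarrow> real \<Rightarrow> (nat \<Rightarrow> real \<Rightarrow> real) \<Rightarrow> (nat \<Rightarrow> real) \<Rightarrow> bool" where
  "prox_grad_seq T \<beta> V F gradF \<eta> u \<tau> \<longleftrightarrow>
     \<eta> > 0 \<and> u 0 \<in> Uad T V \<and> BV T (u 0) \<and>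
     (\<forall>k. \<tau> k > 0 \<and> L2 T (u (Suc k))
        \<and> (\<forall>v. L2 T v \<longrightarrow>
              ereal (lin_model T F gradF (u k) (\<tau> k) (u (Suc k))) + Gfun T \<beta> V (u (Suc k))
              \<le> ereal (lin_model T F gradF (u k) (\<tau> k) v) + Gfun T \<beta> V v)
        \<and> ereal (\<eta> * nrm2L2 T (\<lambda>t. u (Suc k) t - u k t))
            + (ereal (F (u (Suc k))) + ereal \<beta> * TV T (u (Suc k)))
          \<le> ereal (F (u k)) + ereal \<beta> * TV T (u k))"

text \<open>Weak-star convergence in BV(0,T): convergence in L1 together with a uniform bound
  on the total variations (standard characterisation).\<close>
definition wstar_conv_BV :: "real \<Rightarrow> (nat \<Rightarrow> real \<Rightarrow> real) \<Rightarrow> (real \<Rightarrow> real) \<Rightarrow> bool" where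
  "wstar_conv_BV T us ubar \<longleftrightarrow>
     (\<forall>k. BV T (us k)) \<and> BV T ubar
     \<and> ((\<lambda>k. LINT t:{0<..<T}|lborel. \<bar>us k t - ubar t\<bar>) \<longlonglongrightarrow> 0)
     \<and> (\<exists>C. \<forall>k. TV T (us k) \<le> ereal C)"

end

theory Submission
  imports Defs
begin

text \<open>
  Testing the optimality of \<open>u (Suc k)\<close> in the proximal step against an admissible \<open>v\<close> gives
  \<open>\<beta> TV(u (Suc k)) \<le> (\<nabla>F(u k), v - u (Suc k)) + \<tau> k / 2 \<parallel>v - u k\<parallel>\<^sup>2 + \<beta> TV(v)\<close>.
  All iterates take values in the finite set \<open>V\<close>, so their \<open>L\<^sup>1\<close> convergence to \<open>ubar\<close>
  upgrades to \<open>L\<^sup>2\<close> convergence, and by Lipschitz continuity so does that of the gradients.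
  Along a subsequence with \<open>\<tau> k \<rightarrow> taubar\<close> the right-hand side therefore tends to
  \<open>(\<nabla>F(ubar), v - ubar) + taubar / 2 \<parallel>v - ubar\<parallel>\<^sup>2 + \<beta> TV(v)\<close>, and lower semicontinuity
  of \<open>TV\<close> under \<open>L\<^sup>1\<close> convergence bounds \<open>\<beta> TV(ubar)\<close> by this limit. As the model at
  \<open>ubar\<close> itself is \<open>F(ubar)\<close>, this is the claimed minimality.
\<close>

section \<open>Square-integrable functions\<close>

definition square_integrable :: "'a measure \<Rightarrow> ('a \<Rightarrow> real) \<Rightarrow> bool" where
  "square_integrable M f \<longleftrightarrow> f \<in> borel_measurable M \<and> integrable M (\<lambda>x. (f x)\<^sup>2)"

lemma square_integrable_integrable_mult:
  assumes "square_integrable M f" "square_integrable M g"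
  shows "integrable M (\<lambda>x. f x * g x)"
proof (rule Bochner_Integration.integrable_bound)
  show "integrable M (\<lambda>x. (f x)\<^sup>2 + (g x)\<^sup>2)"
    using assms unfolding square_integrable_def by auto
  show "(\<lambda>x. f x * g x) \<in> borel_measurable M"
    using assms unfolding square_integrable_def by auto
  show "AE x in M. norm (f x * g x) \<le> norm ((f x)\<^sup>2 + (g x)\<^sup>2)"
  proof (intro AE_I2)
    fix x
    have "2 * \<bar>f x\<bar> * \<bar>g x\<bar> \<le> \<bar>f x\<bar>\<^sup>2 + \<bar>g x\<bar>\<^sup>2" by (rule sum_squares_bound)
    moreover have "\<bar>f x * g x\<bar> \<le> 2 * \<bar>f x\<bar> * \<bar>g x\<bar>" by (simp add: abs_mult)
    ultimately show "norm (f x * g x) \<le> norm ((f x)\<^sup>2 + (g x)\<^sup>2)" by simp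
  qed
qed

lemma square_integrable_diff:
  assumes "square_integrable M f" "square_integrable M g"
  shows "square_integrable M (\<lambda>x. f x - g x)"
proof -
  have "(\<lambda>x. (f x - g x)\<^sup>2) = (\<lambda>x. (f x)\<^sup>2 - 2 * (f x * g x) + (g x)\<^sup>2)"
    by (simp add: power2_eq_square algebra_simps)
  then show ?thesis
    using assms square_integrable_integrable_mult[OF assms] unfolding square_integrable_def by auto
qed

lemma square_integrable_if_bounded:
  assumes "integrable M f" "AE x in M. \<bar>f x\<bar> \<le> C"
  shows "square_integrable M f"
  unfolding square_integrable_def
proof
  show f: "f \<in> borel_measurable M" using assms(1) by simp
  show "integrable M (\<lambda>x. (f x)\<^sup>2)"
  proof (rule Bochner_Integration.integrable_bound)
    show "integrable M (\<lambda>x. C * f x)" using assms(1) by simp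
    show "AE x in M. norm ((f x)\<^sup>2) \<le> norm (C * f x)"
      using assms(2)
    proof eventually_elim
      case (elim x)
      have "\<bar>f x\<bar> * \<bar>f x\<bar> \<le> C * \<bar>f x\<bar>" by (rule mult_right_mono[OF elim abs_ge_zero])
      moreover have "0 \<le> C" using elim abs_ge_zero order_trans by blast
      ultimately show ?case by (simp add: power2_eq_square abs_mult)
    qed
  qed (use f in simp)
qed

lemma Cauchy_Schwarz_integral:
  assumes f: "square_integrable M f" and g: "square_integrable M g"
  shows "(\<integral>x. \<bar>f x * g x\<bar> \<partial>M) \<le> sqrt (\<integral>x. (f x)\<^sup>2 \<partial>M) * sqrt (\<integral>x. (g x)\<^sup>2 \<partial>M)"
proof -
  have [measurable]: "f \<in> borel_measurable M" "g \<in> borel_measurable M"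
    using f g unfolding square_integrable_def by auto
  have nn_integral_square: "(\<integral>\<^sup>+x. ennreal \<bar>h x\<bar> ^ 2 \<partial>M) = ennreal (\<integral>x. (h x)\<^sup>2 \<partial>M)"
    if "square_integrable M h" for h
    using that unfolding square_integrable_def
    by (subst nn_integral_eq_integral[symmetric]) (auto simp: ennreal_power)
  have "ennreal ((\<integral>x. \<bar>f x * g x\<bar> \<partial>M)\<^sup>2) = (\<integral>\<^sup>+x. ennreal \<bar>f x * g x\<bar> \<partial>M)\<^sup>2"
    using square_integrable_integrable_mult[OF f g]
    by (simp add: nn_integral_eq_integral ennreal_power)
  also have "\<dots> = (\<integral>\<^sup>+x. ennreal \<bar>f x\<bar> * ennreal \<bar>g x\<bar> \<partial>M)\<^sup>2"
    by (simp add: abs_mult ennreal_mult)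
  also have "\<dots> \<le> (\<integral>\<^sup>+x. ennreal \<bar>f x\<bar> ^ 2 \<partial>M) * (\<integral>\<^sup>+x. ennreal \<bar>g x\<bar> ^ 2 \<partial>M)"
    by (rule Cauchy_Schwarz_nn_integral) auto
  also have "\<dots> = ennreal ((\<integral>x. (f x)\<^sup>2 \<partial>M) * (\<integral>x. (g x)\<^sup>2 \<partial>M))"
    using nn_integral_square[OF f] nn_integral_square[OF g] by (simp add: ennreal_mult)
  finally have "(\<integral>x. \<bar>f x * g x\<bar> \<partial>M)\<^sup>2 \<le> (\<integral>x. (f x)\<^sup>2 \<partial>M) * (\<integral>x. (g x)\<^sup>2 \<partial>M)"
    by (rule ennreal_le_iff[THEN iffD1, rotated]) simp
  then show ?thesis
    by (metis real_sqrt_le_mono real_sqrt_mult real_sqrt_abs abs_of_nonneg integral_nonneg_AE AE_I2 abs_ge_zero)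
qed

lemma tendsto_integral_mult_L2:
  assumes f: "\<And>k. square_integrable M (f k)" "square_integrable M f0"
    and g: "\<And>k. square_integrable M (g k)" "square_integrable M g0"
    and f_lim: "(\<lambda>k. \<integral>x. (f k x - f0 x)\<^sup>2 \<partial>M) \<longlonglongrightarrow> 0"
    and g_lim: "(\<lambda>k. \<integral>x. (g k x - g0 x)\<^sup>2 \<partial>M) \<longlonglongrightarrow> 0"
  shows "(\<lambda>k. \<integral>x. f k x * g k x \<partial>M) \<longlonglongrightarrow> (\<integral>x. f0 x * g0 x \<partial>M)"
proof -
  define df where "df k x = f k x - f0 x" for k x
  define dg where "dg k x = g k x - g0 x" for k x
  have df: "square_integrable M (df k)" and dg: "square_integrable M (dg k)" for k
    unfolding df_def dg_def using f g by (auto intro: square_integrable_diff)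
  let ?n = "\<lambda>h. sqrt (\<integral>x. (h x)\<^sup>2 \<partial>M)"
  define s where "s k = ?n (df k) * ?n (dg k) + ?n f0 * ?n (dg k) + ?n (df k) * ?n g0" for k
  have "(\<lambda>k. ?n (df k)) \<longlonglongrightarrow> 0" and "(\<lambda>k. ?n (dg k)) \<longlonglongrightarrow> 0"
    using tendsto_real_sqrt[OF f_lim] tendsto_real_sqrt[OF g_lim] by (simp_all add: df_def dg_def)
  from tendsto_add[OF tendsto_add[OF tendsto_mult[OF this] tendsto_mult_right_zero[OF this(2)]]
      tendsto_mult_left_zero[OF this(1)]]
  have s_lim: "s \<longlonglongrightarrow> 0"
    unfolding s_def by simp
  have bound: "norm ((\<integral>x. f k x * g k x \<partial>M) - (\<integral>x. f0 x * g0 x \<partial>M)) \<le> s k" for k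
  proof -
    have split: "f k x * g k x - f0 x * g0 x = df k x * dg k x + f0 x * dg k x + df k x * g0 x" for x
      unfolding df_def dg_def by algebra
    have int: "integrable M (\<lambda>x. df k x * dg k x)" "integrable M (\<lambda>x. f0 x * dg k x)"
      "integrable M (\<lambda>x. df k x * g0 x)"
      using f g df dg by (simp_all add: square_integrable_integrable_mult)
    have "(\<integral>x. f k x * g k x \<partial>M) - (\<integral>x. f0 x * g0 x \<partial>M)
        = (\<integral>x. df k x * dg k x + f0 x * dg k x + df k x * g0 x \<partial>M)"
      unfolding split[symmetric] using f g
      by (intro Bochner_Integration.integral_diff[symmetric] square_integrable_integrable_mult)
    also have "\<dots> = (\<integral>x. df k x * dg k x \<partial>M) + (\<integral>x. f0 x * dg k x \<partial>M) + (\<integral>x. df k x * g0 x \<partial>M)"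
      using int by simp
    finally have "norm ((\<integral>x. f k x * g k x \<partial>M) - (\<integral>x. f0 x * g0 x \<partial>M))
        \<le> (\<integral>x. \<bar>df k x * dg k x\<bar> \<partial>M) + (\<integral>x. \<bar>f0 x * dg k x\<bar> \<partial>M) + (\<integral>x. \<bar>df k x * g0 x\<bar> \<partial>M)"
      using integral_abs_bound[of M "\<lambda>x. df k x * dg k x"] integral_abs_bound[of M "\<lambda>x. f0 x * dg k x"]
        integral_abs_bound[of M "\<lambda>x. df k x * g0 x"]
      unfolding real_norm_def by linarith
    also have "\<dots> \<le> s k"
      unfolding s_def using f g df dg by (intro add_mono Cauchy_Schwarz_integral)
    finally show ?thesis .
  qed
  from Lim_null_comparison[OF always_eventually[OF allI[OF bound]] s_lim] show ?thesis
    by (rule LIM_zero_cancel)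
qed

lemma tendsto_L2_if_tendsto_L1_bounded:
  fixes f :: "nat \<Rightarrow> 'a \<Rightarrow> real"
  assumes f: "\<And>k. integrable M (f k)" "integrable M f0"
    and bounded: "\<And>k. AE x in M. \<bar>f k x\<bar> \<le> C" "AE x in M. \<bar>f0 x\<bar> \<le> C"
    and lim: "(\<lambda>k. \<integral>x. \<bar>f k x - f0 x\<bar> \<partial>M) \<longlonglongrightarrow> 0"
  shows "(\<lambda>k. \<integral>x. (f k x - f0 x)\<^sup>2 \<partial>M) \<longlonglongrightarrow> 0"
proof -
  have bound: "norm (\<integral>x. (f k x - f0 x)\<^sup>2 \<partial>M) \<le> 2 * \<bar>C\<bar> * (\<integral>x. \<bar>f k x - f0 x\<bar> \<partial>M)" for k
  proof -
    have "AE x in M. (f k x - f0 x)\<^sup>2 \<le> 2 * \<bar>C\<bar> * \<bar>f k x - f0 x\<bar>"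
      using bounded(1)[of k] bounded(2)
    proof eventually_elim
      case (elim x)
      have "\<bar>f k x - f0 x\<bar> \<le> 2 * \<bar>C\<bar>"
        using abs_triangle_ineq4[of "f k x" "f0 x"] elim by linarith
      then have "\<bar>f k x - f0 x\<bar> * \<bar>f k x - f0 x\<bar> \<le> 2 * \<bar>C\<bar> * \<bar>f k x - f0 x\<bar>"
        by (rule mult_right_mono) simp
      then show ?case by (simp add: power2_eq_square)
    qed
    moreover have "AE x in M. 0 \<le> 2 * \<bar>C\<bar> * \<bar>f k x - f0 x\<bar>" by simp
    moreover have "integrable M (\<lambda>x. 2 * \<bar>C\<bar> * \<bar>f k x - f0 x\<bar>)" using f by simp
    ultimately have "(\<integral>x. (f k x - f0 x)\<^sup>2 \<partial>M) \<le> (\<integral>x. 2 * \<bar>C\<bar> * \<bar>f k x - f0 x\<bar> \<partial>M)"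
      by (intro integral_mono_AE')
    then show ?thesis by simp
  qed
  from Lim_null_comparison[OF always_eventually[OF allI[OF bound]] tendsto_mult_right_zero[OF lim]]
  show ?thesis .
qed

lemma tendsto_integral_mult_bounded:
  fixes f :: "nat \<Rightarrow> 'a \<Rightarrow> real"
  assumes f: "\<And>k. integrable M (f k)" "integrable M f0"
    and lim: "(\<lambda>k. \<integral>x. \<bar>f k x - f0 x\<bar> \<partial>M) \<longlonglongrightarrow> 0"
    and h: "h \<in> borel_measurable M" "AE x in M. \<bar>h x\<bar> \<le> B"
  shows "(\<lambda>k. \<integral>x. f k x * h x \<partial>M) \<longlonglongrightarrow> (\<integral>x. f0 x * h x \<partial>M)"
proof -
  have dominated: "AE x in M. \<bar>w x * h x\<bar> \<le> \<bar>B\<bar> * \<bar>w x\<bar>" for w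
    using h(2)
  proof eventually_elim
    case (elim x)
    then have "\<bar>h x\<bar> * \<bar>w x\<bar> \<le> \<bar>B\<bar> * \<bar>w x\<bar>" by (intro mult_right_mono) auto
    then show ?case by (simp add: abs_mult mult.commute)
  qed
  have integrable: "integrable M (\<lambda>x. w x * h x)" if "integrable M w" for w
  proof (rule Bochner_Integration.integrable_bound)
    show "integrable M (\<lambda>x. \<bar>B\<bar> * w x)" using that by simp
    show "(\<lambda>x. w x * h x) \<in> borel_measurable M" using that h(1) by simp
    show "AE x in M. norm (w x * h x) \<le> norm (\<bar>B\<bar> * w x)"
      using dominated[of w] by (simp add: abs_mult)
  qed
  have bound: "norm ((\<integral>x. f k x * h x \<partial>M) - (\<integral>x. f0 x * h x \<partial>M))
      \<le> \<bar>B\<bar> * (\<integral>x. \<bar>f k x - f0 x\<bar> \<partial>M)" for k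
  proof -
    have "(\<integral>x. f k x * h x \<partial>M) - (\<integral>x. f0 x * h x \<partial>M) = (\<integral>x. (f k x - f0 x) * h x \<partial>M)"
      using integrable[OF f(1)] integrable[OF f(2)] by (simp add: left_diff_distrib)
    also have "norm \<dots> \<le> (\<integral>x. \<bar>(f k x - f0 x) * h x\<bar> \<partial>M)"
      by (simp add: integral_abs_bound)
    also have "\<dots> \<le> (\<integral>x. \<bar>B\<bar> * \<bar>f k x - f0 x\<bar> \<partial>M)"
    proof (rule integral_mono_AE')
      show "integrable M (\<lambda>x. \<bar>B\<bar> * \<bar>f k x - f0 x\<bar>)" using f by simp
    qed (simp_all add: dominated)
    finally show ?thesis by simp
  qed
  from Lim_null_comparison[OF always_eventually[OF allI[OF bound]] tendsto_mult_right_zero[OF lim]]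
  show ?thesis by (rule LIM_zero_cancel)
qed

section \<open>Integrable functions and total variation on \<open>(0, T)\<close>\<close>

abbreviation lborel_on :: "real \<Rightarrow> real measure" where
  "lborel_on T \<equiv> restrict_space lborel {0<..<T}"

lemma set_integral_eq_integral_lborel_on:
  fixes f :: "real \<Rightarrow> real"
  shows "(LINT t:{0<..<T}|lborel. f t) = (\<integral>t. f t \<partial>lborel_on T)"
  unfolding set_lebesgue_integral_def by (rule integral_restrict_space[symmetric]) simp

lemma L1_iff_integrable: "L1 T u \<longleftrightarrow> integrable (lborel_on T) u"
  unfolding L1_def set_integrable_def by (simp add: integrable_restrict_space)

lemma L2_iff_square_integrable: "L2 T u \<longleftrightarrow> square_integrable (lborel_on T) u"
  unfolding L2_def square_integrable_def set_integrable_def set_borel_measurable_def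
  by (simp add: integrable_restrict_space borel_measurable_restrict_space_iff)

lemma ipL2_eq_integral: "ipL2 T u v = (\<integral>t. u t * v t \<partial>lborel_on T)"
  unfolding ipL2_def set_integral_eq_integral_lborel_on ..

lemma nrm2L2_eq_integral: "nrm2L2 T u = (\<integral>t. (u t)\<^sup>2 \<partial>lborel_on T)"
  unfolding nrm2L2_def ipL2_eq_integral by (simp add: power2_eq_square)

lemma AE_lborel_on_iff: "(AE t in lborel_on T. P t) \<longleftrightarrow> (AE t in lborel. t \<in> {0<..<T} \<longrightarrow> P t)"
  by (simp add: AE_restrict_space_iff)

lemma Uad_integrable: "u \<in> Uad T V \<Longrightarrow> integrable (lborel_on T) u"
  unfolding Uad_def L1_iff_integrable by simp

lemma Uad_AE_bounded:
  assumes "u \<in> Uad T V" "finite V"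
  shows "AE t in lborel_on T. \<bar>u t\<bar> \<le> (\<Sum>x\<in>V. \<bar>real_of_int x\<bar>)"
proof -
  have "AE t in lborel_on T. u t \<in> real_of_int ` V"
    using assms(1) unfolding Uad_def AE_lborel_on_iff by simp
  then show ?thesis
  proof eventually_elim
    case (elim t)
    then obtain x where "x \<in> V" "u t = real_of_int x" by auto
    with assms(2) show ?case
      using member_le_sum[of x V "\<lambda>x. \<bar>real_of_int x\<bar>"] by auto
  qed
qed

lemma Uad_square_integrable: "u \<in> Uad T V \<Longrightarrow> finite V \<Longrightarrow> square_integrable (lborel_on T) u"
  by (rule square_integrable_if_bounded[OF Uad_integrable Uad_AE_bounded])

lemma TV_nonneg:
  assumes "T > 0"
  shows "0 \<le> TV T u"
proof -
  have "(\<lambda>_. 0) \<in> {\<phi>\<in>Cc1 T. \<forall>t. \<bar>\<phi> t\<bar> \<le> 1}"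
    using assms unfolding Cc1_def by (auto intro!: exI[of _ "\<lambda>_. 0"] exI[of _ "T/2"])
  from SUP_upper[OF this, of "\<lambda>\<phi>. ereal (LINT t:{0<..<T}|lborel. u t * deriv \<phi> t)"]
  show ?thesis unfolding TV_def by (simp add: zero_ereal_def)
qed

lemma BV_TV_eq_ereal: "T > 0 \<Longrightarrow> BV T u \<Longrightarrow> TV T u = ereal (real_of_ereal (TV T u))"
  using TV_nonneg[of T u] unfolding BV_def by (cases "TV T u") auto

lemma integral_deriv_le_TV:
  assumes "\<phi> \<in> Cc1 T" "\<forall>t. \<bar>\<phi> t\<bar> \<le> 1"
  shows "ereal (\<integral>t. u t * deriv \<phi> t \<partial>lborel_on T) \<le> TV T u"
  unfolding TV_def set_integral_eq_integral_lborel_on by (rule SUP_upper) (use assms in auto)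

lemma Cc1_deriv_bounded:
  assumes "\<phi> \<in> Cc1 T"
  obtains B where "deriv \<phi> \<in> borel_measurable (lborel_on T)" "AE t in lborel_on T. \<bar>deriv \<phi> t\<bar> \<le> B"
proof -
  obtain \<phi>' where cont: "continuous_on UNIV \<phi>'" and deriv: "\<And>t. (\<phi> has_real_derivative \<phi>' t) (at t)"
    using assms unfolding Cc1_def by auto
  have "deriv \<phi> = \<phi>'" using deriv by (auto intro!: DERIV_imp_deriv)
  moreover have "compact (\<phi>' ` {0..T})"
    using cont by (intro compact_continuous_image) (auto intro: continuous_on_subset)
  then have "bounded (\<phi>' ` {0..T})" by (rule compact_imp_bounded)
  then obtain B where "\<forall>t\<in>{0..T}. \<bar>\<phi>' t\<bar> \<le> B"
    unfolding bounded_real by auto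
  moreover have "\<phi>' \<in> borel_measurable borel"
    using cont by (rule borel_measurable_continuous_onI)
  ultimately have "deriv \<phi> \<in> borel_measurable (lborel_on T)" "AE t in lborel_on T. \<bar>deriv \<phi> t\<bar> \<le> B"
    by (auto simp: AE_lborel_on_iff intro: measurable_restrict_space1)
  then show ?thesis by (rule that)
qed

lemma TV_lower_semicontinuous:
  assumes "\<And>k. integrable (lborel_on T) (w k)" "integrable (lborel_on T) w0"
    and "(\<lambda>k. \<integral>t. \<bar>w k t - w0 t\<bar> \<partial>lborel_on T) \<longlonglongrightarrow> 0"
    and TV_bound: "\<And>k. TV T (w k) \<le> ereal (c k)" and c_lim: "c \<longlonglongrightarrow> c0"
  shows "TV T w0 \<le> ereal c0"
  unfolding TV_def set_integral_eq_integral_lborel_on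
proof (rule SUP_least)
  fix \<phi> assume "\<phi> \<in> {\<phi> \<in> Cc1 T. \<forall>t. \<bar>\<phi> t\<bar> \<le> 1}"
  then have \<phi>: "\<phi> \<in> Cc1 T" "\<forall>t. \<bar>\<phi> t\<bar> \<le> 1" by auto
  obtain B where "deriv \<phi> \<in> borel_measurable (lborel_on T)" "AE t in lborel_on T. \<bar>deriv \<phi> t\<bar> \<le> B"
    using Cc1_deriv_bounded[OF \<phi>(1)] .
  with assms(1-3) have "(\<lambda>k. \<integral>t. w k t * deriv \<phi> t \<partial>lborel_on T) \<longlonglongrightarrow> (\<integral>t. w0 t * deriv \<phi> t \<partial>lborel_on T)"
    by (rule tendsto_integral_mult_bounded)
  moreover have "(\<integral>t. w k t * deriv \<phi> t \<partial>lborel_on T) \<le> c k" for k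
    using order_trans[OF integral_deriv_le_TV[OF \<phi>] TV_bound] by simp
  ultimately have "(\<integral>t. w0 t * deriv \<phi> t \<partial>lborel_on T) \<le> c0"
    using c_lim by (intro LIMSEQ_le) auto
  then show "ereal (\<integral>t. w0 t * deriv \<phi> t \<partial>lborel_on T) \<le> ereal c0" by simp
qed

section \<open>The proximal-gradient iteration\<close>

lemma Gfun_leD:
  assumes le: "ereal a + Gfun T \<beta> V w \<le> ereal b + Gfun T \<beta> V v"
    and v: "v \<in> Uad T V" "TV T v = ereal tv" and w: "TV T w = ereal tw"
  shows "w \<in> Uad T V" and "a + \<beta> * tw \<le> b + \<beta> * tv"
proof -
  have "ereal b + Gfun T \<beta> V v = ereal (b + \<beta> * tv)"
    using v unfolding Gfun_def delta_Uad_def by simp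
  with le w show "w \<in> Uad T V"
    unfolding Gfun_def delta_Uad_def by (cases "w \<in> Uad T V") simp_all
  with le v w show "a + \<beta> * tw \<le> b + \<beta> * tv"
    unfolding Gfun_def delta_Uad_def by simp
qed

lemma standingD:
  assumes "standing T \<beta> V F gradF"
  shows "T > 0" and "\<beta> > 0" and "finite V" and "L2 T w \<Longrightarrow> L2 T (gradF w)"
  using assms unfolding standing_def by auto

lemma prox_grad_seqD:
  assumes "prox_grad_seq T \<beta> V F gradF \<eta> u \<tau>"
  shows "u 0 \<in> Uad T V" and "\<tau> k > 0"
    and "L2 T w \<Longrightarrow> ereal (lin_model T F gradF (u k) (\<tau> k) (u (Suc k))) + Gfun T \<beta> V (u (Suc k))
                     \<le> ereal (lin_model T F gradF (u k) (\<tau> k) w) + Gfun T \<beta> V w"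
  using assms unfolding prox_grad_seq_def by auto

lemma prox_grad_seq_Uad:
  assumes st: "standing T \<beta> V F gradF" and pg: "prox_grad_seq T \<beta> V F gradF \<eta> u \<tau>"
    and BV: "\<And>k. BV T (u k)"
  shows "u k \<in> Uad T V"
proof (cases k)
  case 0
  then show ?thesis using prox_grad_seqD(1)[OF pg] by simp
next
  case (Suc j)
  have "L2 T (u 0)"
    unfolding L2_iff_square_integrable
    by (rule Uad_square_integrable[OF prox_grad_seqD(1)[OF pg] standingD(3)[OF st]])
  from Gfun_leD(1)[OF prox_grad_seqD(3)[OF pg this, of j] prox_grad_seqD(1)[OF pg]
      BV_TV_eq_ereal[OF standingD(1)[OF st] BV] BV_TV_eq_ereal[OF standingD(1)[OF st] BV]]
  show ?thesis using Suc by simp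
qed

lemma prox_step_TV_bound:
  assumes st: "standing T \<beta> V F gradF" and pg: "prox_grad_seq T \<beta> V F gradF \<eta> u \<tau>"
    and BV: "\<And>k. BV T (u k)" and v: "v \<in> Uad T V" "TV T v = ereal tv"
  shows "\<beta> * real_of_ereal (TV T (u (Suc k)))
    \<le> (\<integral>t. gradF (u k) t * (v t - u (Suc k) t) \<partial>lborel_on T)
      + \<tau> k / 2 * (\<integral>t. (v t - u k t)\<^sup>2 \<partial>lborel_on T) + \<beta> * tv"
proof -
  let ?M = "lborel_on T"
  have fin: "finite V" and T: "T > 0" using standingD[OF st] by auto
  have sq_u: "square_integrable ?M (u j)" for j
    by (rule Uad_square_integrable[OF prox_grad_seq_Uad[OF st pg BV] fin])
  have sq_v: "square_integrable ?M v" by (rule Uad_square_integrable[OF v(1) fin])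
  have sq_g: "square_integrable ?M (gradF (u k))"
    using standingD(4)[OF st] sq_u unfolding L2_iff_square_integrable by blast
  have "lin_model T F gradF (u k) (\<tau> k) (u (Suc k)) + \<beta> * real_of_ereal (TV T (u (Suc k)))
      \<le> lin_model T F gradF (u k) (\<tau> k) v + \<beta> * tv"
    using sq_v unfolding L2_iff_square_integrable[symmetric]
    by (intro Gfun_leD(2)[OF prox_grad_seqD(3)[OF pg] v BV_TV_eq_ereal[OF T BV]])
  moreover have "(\<integral>t. gradF (u k) t * (v t - u k t) \<partial>?M) - (\<integral>t. gradF (u k) t * (u (Suc k) t - u k t) \<partial>?M)
      = (\<integral>t. gradF (u k) t * (v t - u (Suc k) t) \<partial>?M)"
    using sq_g sq_u sq_v
    by (simp add: square_integrable_diff square_integrable_integrable_mult right_diff_distrib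
        flip: Bochner_Integration.integral_diff)
  moreover have "0 \<le> \<tau> k / 2 * (\<integral>t. (u (Suc k) t - u k t)\<^sup>2 \<partial>?M)"
    using prox_grad_seqD(2)[OF pg, of k] by simp
  ultimately show ?thesis
    unfolding lin_model_def ipL2_eq_integral nrm2L2_eq_integral by linarith
qed

lemma tendsto_L2_gradient_if_Lipschitz:
  assumes Lip: "\<exists>L. \<forall>v w. L2 T v \<longrightarrow> L2 T w \<longrightarrow>
            nrmL2 T (\<lambda>t. gradF v t - gradF w t) \<le> L * nrmL2 T (\<lambda>t. v t - w t)"
    and L2: "\<And>k. L2 T (u k)" "L2 T ubar"
    and lim: "(\<lambda>k. \<integral>t. (u k t - ubar t)\<^sup>2 \<partial>lborel_on T) \<longlonglongrightarrow> 0"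
  shows "(\<lambda>k. \<integral>t. (gradF (u k) t - gradF ubar t)\<^sup>2 \<partial>lborel_on T) \<longlonglongrightarrow> 0"
proof -
  obtain L where L: "\<And>v w. L2 T v \<Longrightarrow> L2 T w \<Longrightarrow>
      nrmL2 T (\<lambda>t. gradF v t - gradF w t) \<le> L * nrmL2 T (\<lambda>t. v t - w t)"
    using Lip by blast
  have bound: "norm (\<integral>t. (gradF (u k) t - gradF ubar t)\<^sup>2 \<partial>lborel_on T)
      \<le> L\<^sup>2 * (\<integral>t. (u k t - ubar t)\<^sup>2 \<partial>lborel_on T)" for k
  proof -
    define A where "A = (\<integral>t. (gradF (u k) t - gradF ubar t)\<^sup>2 \<partial>lborel_on T)"
    define B where "B = (\<integral>t. (u k t - ubar t)\<^sup>2 \<partial>lborel_on T)"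
    have "A \<ge> 0" "B \<ge> 0" unfolding A_def B_def by simp_all
    have "sqrt A \<le> L * sqrt B"
      using L[OF L2] unfolding A_def B_def nrmL2_def nrm2L2_eq_integral .
    also have "\<dots> \<le> sqrt (L\<^sup>2 * B)"
      using \<open>B \<ge> 0\<close> by (simp add: real_sqrt_mult mult_right_mono)
    finally show ?thesis
      using \<open>A \<ge> 0\<close> \<open>B \<ge> 0\<close> unfolding A_def[symmetric] B_def[symmetric] by simp
  qed
  from Lim_null_comparison[OF always_eventually[OF allI[OF bound]] tendsto_mult_right_zero[OF lim]]
  show ?thesis .
qed

lemma prox_grad_limit_TV_bound:
  assumes st: "standing T \<beta> V F gradF" and pg: "prox_grad_seq T \<beta> V F gradF \<eta> u \<tau>"
    and Lip: "\<exists>L. \<forall>v w. L2 T v \<longrightarrow> L2 T w \<longrightarrow>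
            nrmL2 T (\<lambda>t. gradF v t - gradF w t) \<le> L * nrmL2 T (\<lambda>t. v t - w t)"
    and ubar: "ubar \<in> Uad T V" and conv: "wstar_conv_BV T u ubar"
    and r: "strict_mono r" "(\<tau> \<circ> r) \<longlonglongrightarrow> taubar"
    and v: "v \<in> Uad T V" "TV T v = ereal tv"
  shows "\<beta> * real_of_ereal (TV T ubar)
    \<le> (\<integral>t. gradF ubar t * (v t - ubar t) \<partial>lborel_on T)
      + taubar / 2 * (\<integral>t. (v t - ubar t)\<^sup>2 \<partial>lborel_on T) + \<beta> * tv"
proof -
  let ?M = "lborel_on T"
  have T: "T > 0" and \<beta>: "\<beta> > 0" and fin: "finite V" using standingD[OF st] by auto
  have BV: "\<And>k. BV T (u k)" "BV T ubar"
    and L1_lim: "(\<lambda>k. \<integral>t. \<bar>u k t - ubar t\<bar> \<partial>?M) \<longlonglongrightarrow> 0"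
    using conv unfolding wstar_conv_BV_def set_integral_eq_integral_lborel_on by auto
  have U: "u k \<in> Uad T V" for k by (rule prox_grad_seq_Uad[OF st pg BV(1)])
  have sq: "\<And>k. square_integrable ?M (u k)" "square_integrable ?M ubar" "square_integrable ?M v"
    using U ubar v(1) fin by (auto intro: Uad_square_integrable)
  have sq_grad: "square_integrable ?M (gradF w)" if "square_integrable ?M w" for w
    using standingD(4)[OF st] that unfolding L2_iff_square_integrable .
  have u_lim: "(\<lambda>k. \<integral>t. (u k t - ubar t)\<^sup>2 \<partial>?M) \<longlonglongrightarrow> 0"
    by (rule tendsto_L2_if_tendsto_L1_bounded[OF Uad_integrable[OF U] Uad_integrable[OF ubar]
          Uad_AE_bounded[OF U fin] Uad_AE_bounded[OF ubar fin] L1_lim])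
  have grad_lim: "(\<lambda>k. \<integral>t. (gradF (u k) t - gradF ubar t)\<^sup>2 \<partial>?M) \<longlonglongrightarrow> 0"
    using Lip sq(1,2) u_lim unfolding L2_iff_square_integrable[symmetric]
    by (rule tendsto_L2_gradient_if_Lipschitz)
  define P where "P k = (\<integral>t. gradF (u k) t * (v t - u (Suc k) t) \<partial>?M)" for k
  define Q where "Q k = (\<integral>t. (v t - u k t)\<^sup>2 \<partial>?M)" for k
  define R where "R k = P k + \<tau> k / 2 * Q k + \<beta> * tv" for k
  define X where "X = (\<integral>t. gradF ubar t * (v t - ubar t) \<partial>?M)
      + taubar / 2 * (\<integral>t. (v t - ubar t)\<^sup>2 \<partial>?M) + \<beta> * tv"
  have diff_lim: "(\<lambda>k. \<integral>t. ((v t - u k t) - (v t - ubar t))\<^sup>2 \<partial>?M) \<longlonglongrightarrow> 0"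
    using u_lim by (simp add: power2_commute)
  have sq_diff: "square_integrable ?M (\<lambda>t. v t - u k t)" "square_integrable ?M (\<lambda>t. v t - ubar t)" for k
    using sq by (simp_all add: square_integrable_diff)
  have "P \<longlonglongrightarrow> (\<integral>t. gradF ubar t * (v t - ubar t) \<partial>?M)"
    unfolding P_def
    by (rule tendsto_integral_mult_L2[OF sq_grad[OF sq(1)] sq_grad[OF sq(2)] sq_diff
          grad_lim LIMSEQ_Suc[OF diff_lim]])
  moreover have "Q \<longlonglongrightarrow> (\<integral>t. (v t - ubar t)\<^sup>2 \<partial>?M)"
    using tendsto_integral_mult_L2[OF sq_diff sq_diff diff_lim diff_lim]
    unfolding Q_def by (simp only: power2_eq_square)
  ultimately have R_lim: "(\<lambda>j. R (r j)) \<longlonglongrightarrow> X"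
    using r LIMSEQ_subseq_LIMSEQ[of P _ r] LIMSEQ_subseq_LIMSEQ[of Q _ r]
    unfolding R_def X_def comp_def by (intro tendsto_intros) auto
  have "TV T ubar \<le> ereal (X / \<beta>)"
  proof (rule TV_lower_semicontinuous)
    show "(\<lambda>j. \<integral>t. \<bar>u (Suc (r j)) t - ubar t\<bar> \<partial>?M) \<longlonglongrightarrow> 0"
      using LIMSEQ_subseq_LIMSEQ[OF LIMSEQ_Suc[OF L1_lim] r(1)] by (simp add: comp_def)
    show "TV T (u (Suc (r j))) \<le> ereal (R (r j) / \<beta>)" for j
    proof -
      from BV_TV_eq_ereal[OF T BV(1)] obtain c where c: "TV T (u (Suc (r j))) = ereal c"
        by (rule that)
      with prox_step_TV_bound[OF st pg BV(1) v, of "r j"] \<beta> show ?thesis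
        unfolding R_def P_def Q_def by (simp add: field_simps)
    qed
    show "(\<lambda>j. R (r j) / \<beta>) \<longlonglongrightarrow> X / \<beta>"
      using R_lim \<beta> by (intro tendsto_divide tendsto_const) auto
  qed (use U ubar Uad_integrable in auto)
  moreover from BV_TV_eq_ereal[OF T BV(2)] obtain c where "TV T ubar = ereal c"
    by (rule that)
  ultimately show ?thesis
    using \<beta> unfolding X_def by (simp add: field_simps)
qed

theorem theorem4p2:
  fixes T \<beta> \<eta> :: real and V :: "int set"
    and F :: "(real \<Rightarrow> real) \<Rightarrow> real" and gradF :: "(real \<Rightarrow> real) \<Rightarrow> (real \<Rightarrow> real)"
    and u :: "nat \<Rightarrow> real \<Rightarrow> real" and \<tau> :: "nat \<Rightarrow> real"
    and ubar :: "real \<Rightarrow> real" and taubar :: real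
  assumes "standing T \<beta> V F gradF"
    and "prox_grad_seq T \<beta> V F gradF \<eta> u \<tau>"
    and "\<exists>L. \<forall>v w. L2 T v \<longrightarrow> L2 T w \<longrightarrow>
            nrmL2 T (\<lambda>t. gradF v t - gradF w t) \<le> L * nrmL2 T (\<lambda>t. v t - w t)"
    and "ubar \<in> Uad T V"
    and "wstar_conv_BV T u ubar"
    and "\<exists>r. strict_mono r \<and> (\<tau> \<circ> r) \<longlonglongrightarrow> taubar"
  shows "ubar \<in> Uad T V \<and>
         (\<forall>v\<in>Uad T V.
            ereal (lin_model T F gradF ubar taubar ubar) + ereal \<beta> * TV T ubar
            \<le> ereal (lin_model T F gradF ubar taubar v) + ereal \<beta> * TV T v)"
proof (intro conjI ballI)
  show "ubar \<in> Uad T V" by fact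
  fix v assume v: "v \<in> Uad T V"
  have T: "T > 0" and \<beta>: "\<beta> > 0" using standingD[OF assms(1)] by auto
  obtain r where r: "strict_mono r" "(\<tau> \<circ> r) \<longlonglongrightarrow> taubar" using assms(6) by blast
  show "ereal (lin_model T F gradF ubar taubar ubar) + ereal \<beta> * TV T ubar
      \<le> ereal (lin_model T F gradF ubar taubar v) + ereal \<beta> * TV T v"
  proof (cases "TV T v")
    case (real tv)
    have "BV T ubar" using assms(5) unfolding wstar_conv_BV_def by blast
    from BV_TV_eq_ereal[OF T this] obtain tb where tb: "TV T ubar = ereal tb"
      by (rule that)
    from prox_grad_limit_TV_bound[OF assms(1-5) r v real]
    have "lin_model T F gradF ubar taubar ubar + \<beta> * tb \<le> lin_model T F gradF ubar taubar v + \<beta> * tv"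
      unfolding lin_model_def ipL2_eq_integral nrm2L2_eq_integral tb by simp
    then show ?thesis unfolding real tb by simp
  next
    case PInf
    then show ?thesis using \<beta> by simp
  next
    case MInf
    then show ?thesis using TV_nonneg[OF T, of v] by simp
  qed
qed

end
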